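(* Let $K$ be a field of characteristic zero, $m\in K[x,y]$ irreducible over $K(x)$ with $n=\deg_y(m)$, and $A=K(x)[y]/\langle m\rangle$ equipped with the derivation $'$ extending $d/dx$. Let $W=(\omega_1,\dots,\omega_n)$ be a suitable basis of $A$ with $e\in K[x]$, $M=(m_{i,j})\in K[x]^{n\times n}$ such that $eW'=MW$ and $\gcd(e,m_{1,1},\dots,m_{n,n})=1$. Let $h=\sum_{i=1}^n\frac{h_i}{de}\omega_i$ with $h_1,\dots,h_n,d\in K[x]$, $\gcd(d,e)=\gcd(h_1,\dots,h_n,d)=1$ and $d$ squarefree. If $h$ is integrable in $A$ and $W$ is a local integral basis at $a\in\bar K$, then $a$ is not a root of $d$.
   Context: $h$ is integrable in $A$ if $h=H'$ for some $H\in A$. $\bar K$ is the algebraic closure of $K$. For $a\in\bar K$, the $n$ roots of $m$ in the Puiseux series field $\bar K\langle\langle x-a\rangle\rangle=\bigcup_{r\ge1}\bar K((\,(x-a)^{1/r}))$ give $K(x)$-embeddings $\sigma_1,\dots,\sigma_n$ of $A$ into it. For a nonzero series $P=\sum_{i\ge0}c_i(x-a)^{r_i}$ with $c_0\neq0$ set $\nu_a(P)=r_0$; for $f\in A$, $\operatorname{val}_a(f)=\min_i\nu_a(\sigma_i(f))$. $f$ is locally integral at $a$ if $\operatorname{val}_a(f)\ge0$, and integral if locally integral at every $a\in\bar K$. A $K(x)$-basis $W$ is a local integral basis at $a$ if its elements are locally integral at $a$ and every element of $A$ locally integral at $a$ is a linear combination of $W$ with coefficients in $K(x)$ having no pole at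 $a$. A suitable basis is a $K(x)$-basis of $A$ consisting of integral elements for which the normalized $e$ above is squarefree. *)

theory Defs
  imports "HOL-Computational_Algebra.Computational_Algebra"
begin

(* K = 'k (field_char_0); K[x] = 'k poly; K(x) = 'k poly fract;
   K[x,y] = 'k poly poly (outer variable y);
   A = K(x)[y]/<m>, elements represented by 'k poly fract poly, equality modulo m. *)

definition mR :: "'k::{field_char_0,field_gcd} poly poly \<Rightarrow> 'k poly fract poly" where
  "mR m = map_poly to_fract m"

definition rf_deriv :: "'k::{field_char_0,field_gcd} poly fract \<Rightarrow> 'k poly fract" where
  "rf_deriv c = (case quot_of_fract c of (p, q) \<Rightarrow>
      Fract (pderiv p * q - p * pderiv q) (q * q))"

(* the derivation ' on A extending d/dx:  (p(x,y))' = p_x + p_y * y',  y' = - m_x / m_y  in A *)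
definition A_deriv :: "'k::{field_char_0,field_gcd} poly poly \<Rightarrow> 'k poly fract poly \<Rightarrow> 'k poly fract poly" where
  "A_deriv m p = (let Mf = mR m;
                      u = (SOME u. Mf dvd (u * pderiv Mf - 1));
                      yp = - (map_poly rf_deriv Mf * u)
                  in (map_poly rf_deriv p + pderiv p * yp) mod Mf)"

definition integrable :: "'k::{field_char_0,field_gcd} poly poly \<Rightarrow> 'k poly fract poly \<Rightarrow> bool" where
  "integrable m h \<longleftrightarrow> (\<exists>H. mR m dvd (A_deriv m H - h))"

definition alg_closure_of :: "('k::field \<Rightarrow> 'c::field) \<Rightarrow> bool" where
  "alg_closure_of \<iota> \<longleftrightarrow>
     (\<forall>x y. \<iota> (x + y) = \<iota> x + \<iota> y) \<and> (\<forall>x y. \<iota> (x * y) = \<iota> x * \<iota> y) \<and> \<iota> 1 = 1 \<and>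
     (\<forall>p::'c poly. degree p \<ge> 1 \<longrightarrow> (\<exists>z. poly p z = 0)) \<and>
     (\<forall>z::'c. \<exists>p::'k poly. p \<noteq> 0 \<and> poly (map_poly \<iota> p) z = 0)"

(* Puiseux embeddings at a: with t = (x-a)^(1/r), an element of Kbar((t)) *)
definition subst_K :: "('k::{field_char_0,field_gcd} \<Rightarrow> 'c::field) \<Rightarrow> 'c \<Rightarrow> nat \<Rightarrow> 'k poly \<Rightarrow> 'c fls" where
  "subst_K \<iota> a r p = poly (map_poly (fls_const \<circ> \<iota>) p) (fls_const a + fls_X ^ r)"

definition subst_rf :: "('k::{field_char_0,field_gcd} \<Rightarrow> 'c::field) \<Rightarrow> 'c \<Rightarrow> nat \<Rightarrow> 'k poly fract \<Rightarrow> 'c fls" where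
  "subst_rf \<iota> a r c = (case quot_of_fract c of (p, q) \<Rightarrow> subst_K \<iota> a r p / subst_K \<iota> a r q)"

definition puiseux_eval ::
  "('k::{field_char_0,field_gcd} \<Rightarrow> 'c::field) \<Rightarrow> 'c \<Rightarrow> nat \<Rightarrow> 'c fls \<Rightarrow> 'k poly fract poly \<Rightarrow> 'c fls" where
  "puiseux_eval \<iota> a r Y f = poly (map_poly (subst_rf \<iota> a r) f) Y"

(* val_a(f) >= 0: for every embedding sigma of A into the Puiseux series field at a,
   i.e. every root Y of m in Kbar((t)) with x - a = t^r, nu(sigma(f)) = subdeg/r >= 0 *)
definition locally_integral ::
  "('k::{field_char_0,field_gcd} \<Rightarrow> 'c::field) \<Rightarrow> 'k poly poly \<Rightarrow> 'c \<Rightarrow> 'k poly fract poly \<Rightarrow> bool" where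
  "locally_integral \<iota> m a f \<longleftrightarrow>
     (\<forall>r\<ge>1. \<forall>Y. puiseux_eval \<iota> a r Y (mR m) = 0 \<longrightarrow> 0 \<le> fls_subdegree (puiseux_eval \<iota> a r Y f))"

definition integral_elem ::
  "('k::{field_char_0,field_gcd} \<Rightarrow> 'c::field) \<Rightarrow> 'k poly poly \<Rightarrow> 'k poly fract poly \<Rightarrow> bool" where
  "integral_elem \<iota> m f \<longleftrightarrow> (\<forall>a. locally_integral \<iota> m a f)"

definition no_pole :: "('k::{field_char_0,field_gcd} \<Rightarrow> 'c::field) \<Rightarrow> 'k poly fract \<Rightarrow> 'c \<Rightarrow> bool" where
  "no_pole \<iota> c a \<longleftrightarrow> poly (map_poly \<iota> (snd (quot_of_fract c))) a \<noteq> 0"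

definition is_basis :: "'k::{field_char_0,field_gcd} poly poly \<Rightarrow> (nat \<Rightarrow> 'k poly fract poly) \<Rightarrow> bool" where
  "is_basis m W \<longleftrightarrow>
     (\<forall>c. mR m dvd (\<Sum>i<degree m. smult (c i) (W i)) \<longrightarrow> (\<forall>i<degree m. c i = 0)) \<and>
     (\<forall>f. \<exists>c. mR m dvd (f - (\<Sum>i<degree m. smult (c i) (W i))))"

definition deriv_rel ::
  "'k::{field_char_0,field_gcd} poly poly \<Rightarrow> (nat \<Rightarrow> 'k poly fract poly) \<Rightarrow> 'k poly \<Rightarrow> (nat \<Rightarrow> nat \<Rightarrow> 'k poly) \<Rightarrow> bool" where
  "deriv_rel m W e M \<longleftrightarrow>
     (\<forall>i<degree m. mR m dvd (smult (to_fract e) (A_deriv m (W i))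
                            - (\<Sum>j<degree m. smult (to_fract (M i j)) (W j))))"

definition suitable_basis ::
  "('k::{field_char_0,field_gcd} \<Rightarrow> 'c::field) \<Rightarrow> 'k poly poly \<Rightarrow> (nat \<Rightarrow> 'k poly fract poly) \<Rightarrow> bool" where
  "suitable_basis \<iota> m W \<longleftrightarrow>
     is_basis m W \<and> (\<forall>i<degree m. integral_elem \<iota> m (W i)) \<and>
     (\<exists>e M. e \<noteq> 0 \<and> deriv_rel m W e M \<and>
        Gcd (insert e {M i j |i j. i < degree m \<and> j < degree m}) = 1 \<and> squarefree e)"

definition local_integral_basis ::
  "('k::{field_char_0,field_gcd} \<Rightarrow> 'c::field) \<Rightarrow> 'k poly poly \<Rightarrow> 'c \<Rightarrow> (nat \<Rightarrow> 'k poly fract poly) \<Rightarrow> bool" where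
  "local_integral_basis \<iota> m a W \<longleftrightarrow>
     is_basis m W \<and> (\<forall>i<degree m. locally_integral \<iota> m a (W i)) \<and>
     (\<forall>f. locally_integral \<iota> m a f \<longrightarrow>
        (\<exists>c. (\<forall>i<degree m. no_pole \<iota> (c i) a) \<and>
             mR m dvd (f - (\<Sum>i<degree m. smult (c i) (W i)))))"

end

theory Submission
  imports Defs "HOL-Number_Theory.Cong"
begin

(* Let q be a prime factor of d vanishing at a; since d is squarefree and prime to e, q divides
   d e exactly once. Writing an antiderivative of h as \<Sum> c_i \<omega>_i, the relation e W' = M W and
   the K(x)-independence of W give h_j/(d e) = c_j' + \<Sum>_i c_i m_ij/e for all j. In the q-adic
   valuation the m_ij/e are integral and the left-hand sides have at most simple poles. If some c_i
   had a pole, one of minimal valuation \<mu> < 0 would have a derivative of valuation \<mu> - 1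
   (characteristic zero) that nothing else can cancel, giving a pole of order at least 2. So all c_i
   are integral at q, hence so are all h_j/(d e), which contradicts the simple pole of h_j/(d e) for
   a j with q not dividing h_j. *)

(* With v_q the q-adic valuation: val_ge q k c means v_q(c) \<ge> k (so it holds for c = 0 and
   every k), val_eq q k c means c \<noteq> 0 and v_q(c) = k. *)

definition val_ge :: "'a::idom \<Rightarrow> int \<Rightarrow> 'a fract \<Rightarrow> bool" where
  "val_ge q k c \<longleftrightarrow> (\<exists>p s. \<not> q dvd s \<and> c = to_fract q powi k * Fract p s)"

definition val_eq :: "'a::idom \<Rightarrow> int \<Rightarrow> 'a fract \<Rightarrow> bool" where
  "val_eq q k c \<longleftrightarrow> (\<exists>p s. \<not> q dvd p \<and> \<not> q dvd s \<and> c = to_fract q powi k * Fract p s)"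

lemma to_fract_power: "to_fract (x ^ n) = to_fract x ^ n"
  by (induction n) simp_all

lemma Fract_power_mult_power_mult:
  fixes q :: "'a::idom"
  assumes "q \<noteq> 0" "s \<noteq> 0"
  shows "Fract (q ^ a * p) (q ^ b * s) = to_fract q powi (int a - int b) * Fract p s"
  using assms by (simp add: power_int_diff Fract_conv_to_fract to_fract_power)

lemma val_ge_zero [simp]: "prime_elem q \<Longrightarrow> val_ge q k 0"
  unfolding val_ge_def
  by (rule exI[of _ 0], rule exI[of _ 1]) (simp add: fract_collapse prime_elem_not_unit)

lemma val_ge_0_Fract: "\<not> q dvd s \<Longrightarrow> val_ge q 0 (Fract p s)"
  unfolding val_ge_def by auto

lemma val_eq_imp_val_ge: "val_eq q k c \<Longrightarrow> val_ge q k c"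
  unfolding val_eq_def val_ge_def by blast

lemma val_ge_add:
  assumes q: "prime_elem q" and "val_ge q k a" "val_ge q k b"
  shows "val_ge q k (a + b)"
proof -
  obtain p s p' s' where "\<not> q dvd s" "\<not> q dvd s'"
    and "a = to_fract q powi k * Fract p s" "b = to_fract q powi k * Fract p' s'"
    using assms unfolding val_ge_def by blast
  moreover from this have "s \<noteq> 0" "s' \<noteq> 0" by auto
  ultimately have "a + b = to_fract q powi k * Fract (p * s' + p' * s) (s * s')"
    by (simp flip: distrib_left)
  moreover have "\<not> q dvd s * s'"
    using q \<open>\<not> q dvd s\<close> \<open>\<not> q dvd s'\<close> by (simp add: prime_elem_dvd_mult_iff)
  ultimately show ?thesis unfolding val_ge_def by blast
qed

lemma val_ge_mult:
  assumes q: "prime_elem q" and "val_ge q k a" "val_ge q l b"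
  shows "val_ge q (k + l) (a * b)"
proof -
  obtain p s p' s' where "\<not> q dvd s" "\<not> q dvd s'"
    and "a = to_fract q powi k * Fract p s" "b = to_fract q powi l * Fract p' s'"
    using assms unfolding val_ge_def by blast
  moreover have "q \<noteq> 0" using q by (rule prime_elem_not_zeroI)
  ultimately have "a * b = to_fract q powi (k + l) * Fract (p * p') (s * s')"
    by (simp add: power_int_add mult_ac)
  moreover have "\<not> q dvd s * s'"
    using q \<open>\<not> q dvd s\<close> \<open>\<not> q dvd s'\<close> by (simp add: prime_elem_dvd_mult_iff)
  ultimately show ?thesis unfolding val_ge_def by blast
qed

lemma val_ge_mono:
  assumes q: "prime_elem q" and "val_ge q k c" "l \<le> k"
  shows "val_ge q l c"
proof -
  obtain p s where s: "\<not> q dvd s" and c: "c = to_fract q powi k * Fract p s"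
    using assms unfolding val_ge_def by blast
  have "q \<noteq> 0" using q by (rule prime_elem_not_zeroI)
  moreover have "s \<noteq> 0" using s by auto
  ultimately have "Fract (q ^ nat (k - l) * p) (q ^ 0 * s) = to_fract q powi (k - l) * Fract p s"
    using \<open>l \<le> k\<close> by (subst Fract_power_mult_power_mult) simp_all
  hence "c = to_fract q powi l * Fract (q ^ nat (k - l) * p) s"
    using \<open>q \<noteq> 0\<close> by (simp add: c power_int_diff)
  thus ?thesis using s unfolding val_ge_def by blast
qed

lemma val_ge_sum:
  "prime_elem q \<Longrightarrow> (\<And>x. x \<in> A \<Longrightarrow> val_ge q k (f x)) \<Longrightarrow> val_ge q k (sum f A)"
  by (induction A rule: infinite_finite_induct) (simp_all add: val_ge_add)

lemma val_eq_imp_not_val_ge: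
  assumes q: "prime_elem q" and "val_eq q k c"
  shows "\<not> val_ge q (k + 1) c"
proof
  assume "val_ge q (k + 1) c"
  then obtain p' s' where s': "\<not> q dvd s'" and c': "c = to_fract q powi (k + 1) * Fract p' s'"
    unfolding val_ge_def by blast
  obtain p s where p: "\<not> q dvd p" and s: "\<not> q dvd s" and c: "c = to_fract q powi k * Fract p s"
    using assms unfolding val_eq_def by blast
  have "q \<noteq> 0" using q by (rule prime_elem_not_zeroI)
  with c c' have "to_fract q powi k * Fract p s = to_fract q powi k * Fract (q * p') s'"
    by (simp add: power_int_add Fract_conv_to_fract mult_ac)
  with \<open>q \<noteq> 0\<close> have "Fract p s = Fract (q * p') s'"
    by simp
  moreover have "s \<noteq> 0" "s' \<noteq> 0" using s s' by auto
  ultimately have "p * s' = q * p' * s" by (simp add: eq_fract)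
  hence "q dvd p * s'" by simp
  with q p s' show False by (simp add: prime_elem_dvd_mult_iff)
qed

lemma val_eq_add:
  assumes q: "prime_elem q" and "val_eq q k a" "val_ge q (k + 1) b"
  shows "val_eq q k (a + b)"
proof -
  obtain p s p' s' where p: "\<not> q dvd p" and s: "\<not> q dvd s" "\<not> q dvd s'"
    and "a = to_fract q powi k * Fract p s" "b = to_fract q powi (k + 1) * Fract p' s'"
    using assms unfolding val_ge_def val_eq_def by blast
  moreover have "q \<noteq> 0" using q by (rule prime_elem_not_zeroI)
  moreover from s have "s \<noteq> 0" "s' \<noteq> 0" by auto
  ultimately have "a + b = to_fract q powi k * Fract (p * s' + q * p' * s) (s * s')"
    by (simp add: power_int_add Fract_conv_to_fract field_simps)
  moreover have "\<not> q dvd p * s' + q * p' * s"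
    using q p s by (simp add: prime_elem_dvd_mult_iff dvd_add_left_iff)
  moreover have "\<not> q dvd s * s'"
    using q s by (simp add: prime_elem_dvd_mult_iff)
  ultimately show ?thesis unfolding val_eq_def by blast
qed

lemma val_eq_exists:
  fixes q :: "'a::{factorial_semiring,idom}"
  assumes q: "prime_elem q" and "c \<noteq> 0"
  shows "\<exists>k. val_eq q k c"
proof -
  obtain p s where c: "c = Fract p s" and "s \<noteq> 0" "p \<noteq> 0"
    using \<open>c \<noteq> 0\<close> by (cases c rule: Fract_cases_nonzero) auto
  have "\<not> is_unit q" using q by (rule prime_elem_not_unit)
  obtain p1 where p1: "p = q ^ multiplicity q p * p1" "\<not> q dvd p1"
    using multiplicity_decompose'[OF \<open>p \<noteq> 0\<close> \<open>\<not> is_unit q\<close>] by blast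
  obtain s1 where s1: "s = q ^ multiplicity q s * s1" "\<not> q dvd s1"
    using multiplicity_decompose'[OF \<open>s \<noteq> 0\<close> \<open>\<not> is_unit q\<close>] by blast
  have "q \<noteq> 0" "s1 \<noteq> 0" using q s1 by (auto simp: prime_elem_not_zeroI)
  have "c = Fract (q ^ multiplicity q p * p1) (q ^ multiplicity q s * s1)"
    using c p1 s1 by simp
  also have "\<dots> = to_fract q powi (int (multiplicity q p) - int (multiplicity q s)) * Fract p1 s1"
    using \<open>q \<noteq> 0\<close> \<open>s1 \<noteq> 0\<close> by (rule Fract_power_mult_power_mult)
  finally show ?thesis using p1 s1 unfolding val_eq_def by blast
qed

lemma val_ge_Fract_prime_mult:
  assumes q: "prime_elem q" and "\<not> q dvd s"
  shows "val_ge q (-1) (Fract p (q * s))"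
proof -
  have "q \<noteq> 0" "s \<noteq> 0" using assms by (auto simp: prime_elem_not_zeroI)
  hence "Fract (q ^ 0 * p) (q ^ 1 * s) = to_fract q powi (-1) * Fract p s"
    by (subst Fract_power_mult_power_mult) simp_all
  thus ?thesis using \<open>\<not> q dvd s\<close> unfolding val_ge_def by auto
qed

lemma val_eq_Fract_prime_mult:
  assumes q: "prime_elem q" and "\<not> q dvd p" "\<not> q dvd s"
  shows "val_eq q (-1) (Fract p (q * s))"
proof -
  have "q \<noteq> 0" "s \<noteq> 0" using assms by (auto simp: prime_elem_not_zeroI)
  hence "Fract (q ^ 0 * p) (q ^ 1 * s) = to_fract q powi (-1) * Fract p s"
    by (subst Fract_power_mult_power_mult) simp_all
  thus ?thesis using \<open>\<not> q dvd p\<close> \<open>\<not> q dvd s\<close> unfolding val_eq_def by auto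
qed

lemma min_val_exists:
  fixes q :: "'a::{factorial_semiring,idom}"
  assumes q: "prime_elem q" and "finite I" and "i1 \<in> I" "c i1 \<noteq> 0"
  obtains \<mu> i0 where "i0 \<in> I" "val_eq q \<mu> (c i0)" "\<And>i. i \<in> I \<Longrightarrow> val_ge q \<mu> (c i)"
proof -
  define J where "J = {i \<in> I. c i \<noteq> 0}"
  have "\<forall>i\<in>J. \<exists>k. val_eq q k (c i)" unfolding J_def using q val_eq_exists by blast
  then obtain v where v: "\<And>i. i \<in> J \<Longrightarrow> val_eq q (v i) (c i)" by metis
  have "finite (v ` J)" "v ` J \<noteq> {}" using assms unfolding J_def by auto
  then obtain i0 where "i0 \<in> J" "v i0 = Min (v ` J)" by (metis Min_in imageE)
  moreover have "val_ge q (v i0) (c i)" if "i \<in> I" for i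
  proof (cases "i \<in> J")
    case True
    hence "v i0 \<le> v i" using \<open>finite (v ` J)\<close> \<open>v i0 = Min (v ` J)\<close> by simp
    thus ?thesis using v[OF True] q by (blast intro: val_ge_mono val_eq_imp_val_ge)
  qed (use q that in \<open>simp add: J_def\<close>)
  ultimately show ?thesis using that v unfolding J_def by blast
qed

lemma rf_deriv_Fract:
  fixes p s :: "'k::{field_char_0,field_gcd} poly"
  assumes "s \<noteq> 0"
  shows "rf_deriv (Fract p s) = Fract (pderiv p * s - p * pderiv s) (s * s)"
proof -
  obtain p0 s0 where q: "quot_of_fract (Fract p s) = (p0, s0)"
    by (cases "quot_of_fract (Fract p s)")
  have s0: "s0 \<noteq> 0" using snd_quot_of_fract_nonzero[of "Fract p s"] q by simp
  have "Fract p0 s0 = Fract p s" using Fract_quot_of_fract[of "Fract p s"] q by simp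
  hence cross: "p0 * s = p * s0" using s0 assms by (simp add: eq_fract)
  hence "pderiv (p0 * s) = pderiv (p * s0)" by simp
  hence cross': "pderiv p0 * s + p0 * pderiv s = pderiv p * s0 + p * pderiv s0"
    by (simp add: pderiv_mult algebra_simps)
  have "(pderiv p0 * s0 - p0 * pderiv s0) * (s * s) = (pderiv p * s - p * pderiv s) * (s0 * s0)"
    using cross cross' by algebra
  then show ?thesis unfolding rf_deriv_def q using s0 assms by (simp add: eq_fract)
qed

lemma rf_deriv_0 [simp]: "rf_deriv 0 = 0"
  using rf_deriv_Fract[of 1 0] by (simp add: fract_collapse)

lemma rf_deriv_add: "rf_deriv (a + b) = rf_deriv a + rf_deriv b"
proof (cases a; cases b)
  fix p s p' s' assume "a = Fract p s" "s \<noteq> 0" "b = Fract p' s'" "s' \<noteq> 0"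
  thus ?thesis by (simp add: rf_deriv_Fract eq_fract pderiv_mult pderiv_add algebra_simps)
qed

lemma rf_deriv_mult: "rf_deriv (a * b) = rf_deriv a * b + a * rf_deriv b"
proof (cases a; cases b)
  fix p s p' s' assume "a = Fract p s" "s \<noteq> 0" "b = Fract p' s'" "s' \<noteq> 0"
  thus ?thesis by (simp add: rf_deriv_Fract eq_fract pderiv_mult algebra_simps)
qed

lemma val_ge_0_rf_deriv:
  fixes q :: "'k::{field_char_0,field_gcd} poly"
  assumes q: "prime_elem q" and "val_ge q 0 c"
  shows "val_ge q 0 (rf_deriv c)"
proof -
  obtain p s where s: "\<not> q dvd s" and c: "c = Fract p s"
    using assms(2) unfolding val_ge_def by auto
  have "s \<noteq> 0" using s by auto
  hence "rf_deriv c = Fract (pderiv p * s - p * pderiv s) (s * s)"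
    by (simp add: c rf_deriv_Fract)
  moreover have "\<not> q dvd s * s" using q s by (simp add: prime_elem_dvd_mult_iff)
  ultimately show ?thesis by (simp add: val_ge_0_Fract)
qed

lemma val_eq_rf_deriv:
  fixes q :: "'k::{field_char_0,field_gcd} poly"
  assumes q: "prime_elem q" and "val_eq q k c" "k < 0"
  shows "val_eq q (k - 1) (rf_deriv c)"
proof -
  obtain p s where p: "\<not> q dvd p" and s: "\<not> q dvd s" and c: "c = to_fract q powi k * Fract p s"
    using assms(2) unfolding val_eq_def by blast
  define K where "K = nat (- k) - 1"
  have K: "k = - int (Suc K)" using \<open>k < 0\<close> by (simp add: K_def)
  have "q \<noteq> 0" "s \<noteq> 0" using q s by (auto simp: prime_elem_not_zeroI)
  have "c = Fract (q ^ 0 * p) (q ^ Suc K * s)"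
    by (subst Fract_power_mult_power_mult[OF \<open>q \<noteq> 0\<close> \<open>s \<noteq> 0\<close>]) (simp add: c K)
  hence c': "c = Fract p (q ^ Suc K * s)" by simp
  define N where
    "N = q * (pderiv p * s - p * pderiv s) - smult (of_nat (Suc K)) (p * s * pderiv q)"
  have "pderiv (q ^ Suc K * s) = q ^ K * (q * pderiv s + smult (of_nat (Suc K)) (s * pderiv q))"
    by (simp only: pderiv_mult pderiv_power_Suc mult_smult_left mult_smult_right)
      (simp add: algebra_simps)
  hence "rf_deriv c = Fract (q ^ K * N) (q ^ (Suc K + Suc K) * (s * s))"
    using \<open>q \<noteq> 0\<close> \<open>s \<noteq> 0\<close>
    by (simp add: c' rf_deriv_Fract N_def algebra_simps flip: power_add)
  also have "\<dots> = to_fract q powi (int K - int (Suc K + Suc K)) * Fract N (s * s)"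
    using \<open>q \<noteq> 0\<close> \<open>s \<noteq> 0\<close> by (intro Fract_power_mult_power_mult) simp_all
  also have "int K - int (Suc K + Suc K) = k - 1" using K by simp
  finally have deriv: "rf_deriv c = to_fract q powi (k - 1) * Fract N (s * s)" .
  have "\<not> q dvd pderiv q"
    using q by (auto simp: prime_elem_def is_unit_iff_degree)
  hence "\<not> q dvd p * s * pderiv q" using q p s by (simp add: prime_elem_dvd_mult_iff)
  \<comment> \<open>characteristic zero: the summand of N coming from differentiating q^(K+1) survives mod q\<close>
  hence "\<not> q dvd smult (of_nat (Suc K)) (p * s * pderiv q)"
    by (meson dvd_smult_cancel of_nat_neq_0)
  hence "\<not> q dvd N" by (simp add: N_def dvd_diff_right_iff)
  moreover have "\<not> q dvd s * s" using q s by (simp add: prime_elem_dvd_mult_iff)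
  ultimately show ?thesis using deriv unfolding val_eq_def by blast
qed

lemma first_order_system_solution_val_ge_0:
  fixes q :: "'k::{field_char_0,field_gcd} poly"
  assumes q: "prime_elem q" and "finite I"
    and b: "\<And>i j. i \<in> I \<Longrightarrow> j \<in> I \<Longrightarrow> val_ge q 0 (b i j)"
    and h: "\<And>j. j \<in> I \<Longrightarrow> val_ge q (-1) (h j)"
    and sys: "\<And>j. j \<in> I \<Longrightarrow> h j = rf_deriv (c j) + (\<Sum>i\<in>I. c i * b i j)"
    and "i \<in> I"
  shows "val_ge q 0 (c i)"
proof (rule ccontr)
  assume "\<not> val_ge q 0 (c i)"
  hence "c i \<noteq> 0" using q by auto
  then obtain \<mu> i0 where "i0 \<in> I" and \<mu>: "val_eq q \<mu> (c i0)"
    and ge: "\<And>i. i \<in> I \<Longrightarrow> val_ge q \<mu> (c i)"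
    using min_val_exists[OF q \<open>finite I\<close> \<open>i \<in> I\<close>] by blast
  have "\<mu> < 0" using ge[OF \<open>i \<in> I\<close>] \<open>\<not> val_ge q 0 (c i)\<close> q by (metis not_less val_ge_mono)
  have "val_ge q \<mu> (c i * b i i0)" if "i \<in> I" for i
    using val_ge_mult[OF q ge[OF that] b[OF that \<open>i0 \<in> I\<close>]] by simp
  hence "val_ge q (\<mu> - 1 + 1) (\<Sum>i\<in>I. c i * b i i0)"
    using q by (simp add: val_ge_sum)
  hence "val_eq q (\<mu> - 1) (h i0)"
    using val_eq_add[OF q val_eq_rf_deriv[OF q \<mu> \<open>\<mu> < 0\<close>]] sys[OF \<open>i0 \<in> I\<close>] by simp
  moreover have "val_ge q (\<mu> - 1 + 1) (h i0)"
    using h[OF \<open>i0 \<in> I\<close>] \<open>\<mu> < 0\<close> q by (auto intro: val_ge_mono)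
  ultimately show False using q val_eq_imp_not_val_ge by blast
qed

lemma first_order_system_val_ge_0:
  fixes q :: "'k::{field_char_0,field_gcd} poly"
  assumes q: "prime_elem q" and "finite I"
    and b: "\<And>i j. i \<in> I \<Longrightarrow> j \<in> I \<Longrightarrow> val_ge q 0 (b i j)"
    and h: "\<And>j. j \<in> I \<Longrightarrow> val_ge q (-1) (h j)"
    and sys: "\<And>j. j \<in> I \<Longrightarrow> h j = rf_deriv (c j) + (\<Sum>i\<in>I. c i * b i j)"
    and "j \<in> I"
  shows "val_ge q 0 (h j)"
proof -
  have c: "val_ge q 0 (c i)" if "i \<in> I" for i
    using first_order_system_solution_val_ge_0[OF q \<open>finite I\<close> b h sys that] .
  have "val_ge q (0 + 0) (c i * b i j)" if "i \<in> I" for i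
    using val_ge_mult[OF q c[OF that] b[OF that \<open>j \<in> I\<close>]] .
  thus ?thesis
    using q c[OF \<open>j \<in> I\<close>] sys[OF \<open>j \<in> I\<close>] by (simp add: val_ge_add val_ge_sum val_ge_0_rf_deriv)
qed

lemma map_poly_rf_deriv_add:
  "map_poly rf_deriv (p + r) = map_poly rf_deriv p + map_poly rf_deriv r"
  by (rule poly_eqI) (simp add: coeff_map_poly rf_deriv_add)

lemma map_poly_rf_deriv_smult:
  "map_poly rf_deriv (smult c p) = smult (rf_deriv c) p + smult c (map_poly rf_deriv p)"
  by (rule poly_eqI) (simp add: coeff_map_poly rf_deriv_mult)

lemma map_poly_rf_deriv_mult:
  "map_poly rf_deriv (p * r) = map_poly rf_deriv p * r + p * map_poly rf_deriv r"
proof (induction p)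
  case (pCons a p)
  have "map_poly rf_deriv (pCons a p * r) = map_poly rf_deriv (smult a r + pCons 0 (p * r))"
    by simp
  also have "\<dots> = map_poly rf_deriv (pCons a p) * r + pCons a p * map_poly rf_deriv r"
    by (simp add: map_poly_rf_deriv_add map_poly_rf_deriv_smult map_poly_pCons pCons.IH
        algebra_simps)
  finally show ?case .
qed simp

definition total_deriv ::
  "'k::{field_char_0,field_gcd} poly fract poly \<Rightarrow> 'k poly fract poly \<Rightarrow> 'k poly fract poly" where
  "total_deriv Y' p = map_poly rf_deriv p + pderiv p * Y'"

lemma total_deriv_add: "total_deriv Y' (p + r) = total_deriv Y' p + total_deriv Y' r"
  unfolding total_deriv_def by (simp add: map_poly_rf_deriv_add pderiv_add algebra_simps)

lemma total_deriv_mult: "total_deriv Y' (p * r) = total_deriv Y' p * r + p * total_deriv Y' r"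
  unfolding total_deriv_def by (simp add: map_poly_rf_deriv_mult pderiv_mult algebra_simps)

lemma total_deriv_smult:
  "total_deriv Y' (smult c p) = smult (rf_deriv c) p + smult c (total_deriv Y' p)"
  unfolding total_deriv_def
  by (simp add: map_poly_rf_deriv_smult pderiv_smult smult_add_right algebra_simps)

lemma total_deriv_0 [simp]: "total_deriv Y' 0 = 0"
  by (simp add: total_deriv_def)

lemma total_deriv_sum: "total_deriv Y' (sum f A) = (\<Sum>x\<in>A. total_deriv Y' (f x))"
  by (induction A rule: infinite_finite_induct) (simp_all add: total_deriv_add)

definition y_deriv :: "'k::{field_char_0,field_gcd} poly poly \<Rightarrow> 'k poly fract poly" where
  "y_deriv m = - (map_poly rf_deriv (mR m) * (SOME u. mR m dvd (u * pderiv (mR m) - 1)))"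

lemma A_deriv_conv_total_deriv: "A_deriv m p = total_deriv (y_deriv m) p mod mR m"
  unfolding A_deriv_def total_deriv_def y_deriv_def Let_def by simp

lemma irreducible_imp_inverse_mod:
  fixes P Q :: "'a::field poly"
  assumes P: "irreducible P" and "Q \<noteq> 0" "degree Q < degree P"
  shows "\<exists>u. P dvd u * Q - 1"
  using assms(2,3)
proof (induction "degree Q" arbitrary: Q rule: less_induct)
  case less
  show ?case
  proof (cases "degree Q = 0")
    case True
    then obtain c where "Q = [:c:]" "c \<noteq> 0" using \<open>Q \<noteq> 0\<close> by (metis degree_eq_zeroE pCons_eq_0_iff)
    hence "[:inverse c:] * Q - 1 = 0" by simp
    thus ?thesis by (metis dvd_0_right)
  next
    case False
    have "\<not> Q dvd P"
    proof
      assume "Q dvd P"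
      then obtain r where "P = Q * r" by (elim dvdE)
      moreover have "\<not> is_unit Q" using False by (simp add: is_unit_iff_degree \<open>Q \<noteq> 0\<close>)
      ultimately have "is_unit r" using P irreducibleD by blast
      hence "degree P = degree Q"
        using \<open>P = Q * r\<close> \<open>Q \<noteq> 0\<close>
        by (metis degree_mult_eq is_unit_iff_degree not_is_unit_0 add_0_right)
      thus False using less.prems by simp
    qed
    hence "P mod Q \<noteq> 0" "degree (P mod Q) < degree Q"
      using \<open>Q \<noteq> 0\<close> by (simp_all add: mod_eq_0_iff_dvd degree_mod_less_degree)
    then obtain u where "P dvd u * (P mod Q) - 1"
      using less.hyps less.prems by (metis order.strict_trans)
    moreover have "u * (P mod Q) - 1 = u * P + (- (u * (P div Q))) * Q - 1"
      by (simp add: minus_div_mult_eq_mod[symmetric] algebra_simps)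
    ultimately have "P dvd (- (u * (P div Q))) * Q - 1"
      by (metis add_diff_eq dvd_add_right_iff dvd_triv_right)
    thus ?thesis by blast
  qed
qed

lemma pderiv_fract_poly_nonzero:
  fixes P :: "'a::{idom,ring_char_0} fract poly"
  assumes "degree P \<noteq> 0"
  shows "pderiv P \<noteq> 0"
proof -
  obtain n where n: "degree P = Suc n" using assms by (cases "degree P") auto
  have "(of_nat (Suc n) :: 'a fract) = to_fract (of_nat (Suc n))"
    by (simp add: of_nat_fract to_fract_def)
  hence "(of_nat (Suc n) :: 'a fract) \<noteq> 0" by (simp del: of_nat_Suc)
  moreover have "P \<noteq> 0" using n by auto
  hence "lead_coeff P \<noteq> 0" by simp
  ultimately have "coeff (pderiv P) n \<noteq> 0" by (simp add: coeff_pderiv n del: of_nat_Suc)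
  thus ?thesis by auto
qed

lemma degree_pderiv_less:
  fixes p :: "'a::{comm_semiring_1,semiring_no_zero_divisors} poly"
  assumes "degree p \<noteq> 0"
  shows "degree (pderiv p) < degree p"
proof -
  obtain n where n: "degree p = Suc n" using assms by (cases "degree p") auto
  have "degree (pderiv p) \<le> n"
    by (rule degree_le) (auto simp: coeff_pderiv n coeff_eq_0)
  thus ?thesis using n by simp
qed

lemma mR_dvd_y_deriv_inverse:
  assumes "irreducible (mR m)"
  shows "mR m dvd (SOME u. mR m dvd (u * pderiv (mR m) - 1)) * pderiv (mR m) - 1"
proof (rule someI_ex, rule irreducible_imp_inverse_mod[OF assms])
  have "degree (mR m) \<noteq> 0"
    using assms by (metis irreducible_not_unit is_unit_iff_degree not_irreducible_zero)
  thus "pderiv (mR m) \<noteq> 0" by (rule pderiv_fract_poly_nonzero)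
  show "degree (pderiv (mR m)) < degree (mR m)"
    using \<open>degree (mR m) \<noteq> 0\<close> by (rule degree_pderiv_less)
qed

lemma mR_dvd_total_deriv_mR:
  assumes "irreducible (mR m)"
  shows "mR m dvd total_deriv (y_deriv m) (mR m)"
proof -
  define u where "u = (SOME u. mR m dvd (u * pderiv (mR m) - 1))"
  have "total_deriv (y_deriv m) (mR m) = - (map_poly rf_deriv (mR m) * (u * pderiv (mR m) - 1))"
    unfolding total_deriv_def y_deriv_def u_def[symmetric] by (simp add: algebra_simps)
  thus ?thesis using mR_dvd_y_deriv_inverse[OF assms] unfolding u_def[symmetric] by simp
qed

lemma total_deriv_cong:
  assumes "irreducible (mR m)" and "[p = r] (mod mR m)"
  shows "[total_deriv (y_deriv m) p = total_deriv (y_deriv m) r] (mod mR m)"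
proof -
  obtain g where "p = r + mR m * g"
    using assms(2) by (metis cong_iff_dvd_diff dvdE diff_add_cancel add.commute)
  hence "total_deriv (y_deriv m) p
      = total_deriv (y_deriv m) r + total_deriv (y_deriv m) (mR m) * g
        + mR m * total_deriv (y_deriv m) g"
    by (simp add: total_deriv_add total_deriv_mult)
  thus ?thesis using mR_dvd_total_deriv_mR[OF assms(1)] by (simp add: cong_iff_dvd_diff)
qed

lemma A_deriv_cong_total_deriv: "[A_deriv m p = total_deriv (y_deriv m) p] (mod mR m)"
  by (simp add: A_deriv_conv_total_deriv)

lemma A_deriv_cong:
  assumes "irreducible (mR m)" and "[p = r] (mod mR m)"
  shows "[A_deriv m p = A_deriv m r] (mod mR m)"
  using total_deriv_cong[OF assms] by (simp add: A_deriv_conv_total_deriv)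

lemma smult_sum_right: "smult c (sum f A) = (\<Sum>x\<in>A. smult c (f x))"
  by (induction A rule: infinite_finite_induct) (simp_all add: smult_add_right)

lemma cong_smult: "[a = b] (mod P) \<Longrightarrow> [smult c a = smult c b] (mod P)"
  for a b P :: "'a::field poly"
  by (simp add: cong_iff_dvd_diff dvd_smult flip: smult_diff_right)

lemma deriv_rel_cong:
  assumes "deriv_rel m W e M" "e \<noteq> 0" "i < degree m"
  shows "[A_deriv m (W i) = (\<Sum>j<degree m. smult (Fract (M i j) e) (W j))] (mod mR m)"
proof -
  have "[smult (to_fract e) (A_deriv m (W i))
        = (\<Sum>j<degree m. smult (to_fract (M i j)) (W j))] (mod mR m)"
    using assms unfolding deriv_rel_def by (simp add: cong_iff_dvd_diff)
  hence "[smult (inverse (to_fract e)) (smult (to_fract e) (A_deriv m (W i)))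
        = smult (inverse (to_fract e)) (\<Sum>j<degree m. smult (to_fract (M i j)) (W j))] (mod mR m)"
    by (rule cong_smult)
  thus ?thesis using \<open>e \<noteq> 0\<close> by (simp add: smult_sum_right Fract_conv_to_fract field_simps)
qed

lemma sum_smult_sum_swap:
  "(\<Sum>i\<in>I. smult (c i) (\<Sum>j\<in>J. smult (F i j) (w j))) = (\<Sum>j\<in>J. smult (\<Sum>i\<in>I. c i * F i j) (w j))"
proof -
  have "(\<Sum>i\<in>I. smult (c i) (\<Sum>j\<in>J. smult (F i j) (w j))) = (\<Sum>i\<in>I. \<Sum>j\<in>J. smult (c i * F i j) (w j))"
    by (simp add: smult_sum_right)
  also have "\<dots> = (\<Sum>j\<in>J. \<Sum>i\<in>I. smult (c i * F i j) (w j))"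
    by (rule sum.swap)
  finally show ?thesis by (simp add: smult_sum)
qed

lemma A_deriv_basis_combination:
  assumes "irreducible (mR m)" "deriv_rel m W e M" "e \<noteq> 0"
  shows "[A_deriv m (\<Sum>i<degree m. smult (c i) (W i))
        = (\<Sum>j<degree m. smult (rf_deriv (c j) + (\<Sum>i<degree m. c i * Fract (M i j) e)) (W j))]
         (mod mR m)"
proof -
  define n where "n = degree m"
  define D where "D = total_deriv (y_deriv m)"
  define F where "F i j = Fract (M i j) e" for i j
  have "[A_deriv m (\<Sum>i<n. smult (c i) (W i)) = D (\<Sum>i<n. smult (c i) (W i))] (mod mR m)"
    unfolding D_def by (rule A_deriv_cong_total_deriv)
  also have "D (\<Sum>i<n. smult (c i) (W i))
      = (\<Sum>i<n. smult (rf_deriv (c i)) (W i) + smult (c i) (D (W i)))"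
    unfolding D_def by (simp add: total_deriv_sum total_deriv_smult)
  also have "[\<dots> = (\<Sum>i<n. smult (rf_deriv (c i)) (W i) + smult (c i) (\<Sum>j<n. smult (F i j) (W j)))]
      (mod mR m)"
  proof (intro cong_sum cong_add cong_refl cong_smult)
    fix i assume "i \<in> {..<n}"
    hence "[A_deriv m (W i) = (\<Sum>j<n. smult (F i j) (W j))] (mod mR m)"
      using deriv_rel_cong[OF assms(2,3)] unfolding n_def F_def by simp
    thus "[D (W i) = (\<Sum>j<n. smult (F i j) (W j))] (mod mR m)"
      unfolding D_def using A_deriv_cong_total_deriv cong_sym cong_trans by blast
  qed
  also have "(\<Sum>i<n. smult (rf_deriv (c i)) (W i) + smult (c i) (\<Sum>j<n. smult (F i j) (W j)))
       = (\<Sum>j<n. smult (rf_deriv (c j) + (\<Sum>i<n. c i * F i j)) (W j))"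
    by (simp add: sum.distrib smult_add_left sum_smult_sum_swap)
  finally show ?thesis unfolding n_def F_def .
qed

lemma is_basis_coeffs_unique:
  assumes "is_basis m W"
    and "[(\<Sum>i<degree m. smult (a i) (W i)) = (\<Sum>i<degree m. smult (b i) (W i))] (mod mR m)"
    and "i < degree m"
  shows "a i = b i"
proof -
  have "mR m dvd (\<Sum>i<degree m. smult (a i - b i) (W i))"
    using assms(2) by (simp add: cong_iff_dvd_diff smult_diff_left sum_subtractf)
  thus ?thesis using assms(1,3) unfolding is_basis_def by fastforce
qed

lemma integrable_basis_coeffs:
  assumes "irreducible (mR m)" "is_basis m W" "deriv_rel m W e M" "e \<noteq> 0"
    and "integrable m (\<Sum>i<degree m. smult (h i) (W i))"
  shows "\<exists>c. \<forall>j<degree m. h j = rf_deriv (c j) + (\<Sum>i<degree m. c i * Fract (M i j) e)"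
proof -
  obtain H where H: "[A_deriv m H = (\<Sum>i<degree m. smult (h i) (W i))] (mod mR m)"
    using assms(5) unfolding integrable_def cong_iff_dvd_diff by blast
  obtain c where "[H = (\<Sum>i<degree m. smult (c i) (W i))] (mod mR m)"
    using assms(2) unfolding is_basis_def cong_iff_dvd_diff by blast
  hence "[A_deriv m H = A_deriv m (\<Sum>i<degree m. smult (c i) (W i))] (mod mR m)"
    by (rule A_deriv_cong[OF assms(1)])
  also note A_deriv_basis_combination[OF assms(1,3,4)]
  finally have "[(\<Sum>i<degree m. smult (h i) (W i))
      = (\<Sum>j<degree m. smult (rf_deriv (c j) + (\<Sum>i<degree m. c i * Fract (M i j) e)) (W j))]
      (mod mR m)"
    using H cong_sym cong_trans by blast
  hence "h j = rf_deriv (c j) + (\<Sum>i<degree m. c i * Fract (M i j) e)" if "j < degree m" for j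
    using that by (rule is_basis_coeffs_unique[OF assms(2)])
  thus ?thesis by blast
qed

lemma map_poly_mult_hom:
  fixes \<iota> :: "'a::comm_semiring_1 \<Rightarrow> 'b::comm_semiring_1"
  assumes zero: "\<iota> 0 = 0" and add: "\<And>x y. \<iota> (x + y) = \<iota> x + \<iota> y"
    and mult: "\<And>x y. \<iota> (x * y) = \<iota> x * \<iota> y"
  shows "map_poly \<iota> (p * r) = map_poly \<iota> p * map_poly \<iota> r"
proof (induction p)
  case (pCons c p)
  have map_add: "map_poly \<iota> (x + y) = map_poly \<iota> x + map_poly \<iota> y" for x y
    by (rule poly_eqI) (simp add: coeff_map_poly zero add)
  show ?case
    by (simp add: map_add map_poly_smult map_poly_pCons zero mult pCons.IH)
qed simp

lemma prime_factor_with_root: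
  fixes d :: "'k::field_gcd poly" and \<iota> :: "'k \<Rightarrow> 'c::field"
  assumes \<iota>: "alg_closure_of \<iota>" and "d \<noteq> 0" and "poly (map_poly \<iota> d) a = 0"
  shows "\<exists>q. prime q \<and> q dvd d \<and> poly (map_poly \<iota> q) a = 0"
proof -
  have add: "\<And>x y. \<iota> (x + y) = \<iota> x + \<iota> y" and mult: "\<And>x y. \<iota> (x * y) = \<iota> x * \<iota> y"
    and one: "\<iota> 1 = 1" using \<iota> unfolding alg_closure_of_def by auto
  have zero: "\<iota> 0 = 0" using add[of 0 0] by (metis add.right_neutral add_left_cancel)
  define ev where "ev p = poly (map_poly \<iota> p) a" for p
  have ev_mult: "ev (x * y) = ev x * ev y" for x y
    unfolding ev_def map_poly_mult_hom[of \<iota>, OF zero add mult] by simp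
  have ev_unit: "ev u \<noteq> 0" if u: "is_unit u" for u
  proof -
    from u obtain w where "1 = u * w" by (elim dvdE)
    moreover have "ev 1 = 1" using one by (simp add: ev_def)
    ultimately have "ev u * ev w = 1" by (simp flip: ev_mult)
    thus ?thesis by auto
  qed
  have "\<exists>q. prime q \<and> q dvd x \<and> ev q = 0" if "x \<noteq> 0" "ev x = 0" for x
    using that
  proof (induction x rule: prime_divisors_induct)
    case (factor p x)
    show ?case
    proof (cases "ev p = 0")
      case False
      hence "\<exists>q. prime q \<and> q dvd x \<and> ev q = 0" using factor by (simp add: ev_mult)
      thus ?thesis by (auto intro: dvd_mult)
    qed (use factor.hyps in auto)
  qed (auto dest: ev_unit)
  thus ?thesis using assms(2,3) unfolding ev_def by blast
qed

lemma squarefree_prime_factor: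
  fixes d q :: "'a::algebraic_semidom"
  assumes "squarefree d" "q dvd d" "\<not> is_unit q"
  obtains d1 where "d = q * d1" "\<not> q dvd d1"
proof -
  obtain d1 where d: "d = q * d1" using \<open>q dvd d\<close> by (elim dvdE)
  moreover have "\<not> q dvd d1"
  proof
    assume "q dvd d1"
    hence "q\<^sup>2 dvd d" by (simp add: d power2_eq_square mult_dvd_mono)
    thus False using assms(1,3) by (auto simp: squarefree_def)
  qed
  ultimately show ?thesis using that by blast
qed

lemma Gcd_eq_1_imp_not_dvd:
  fixes A :: "'a::semiring_Gcd set"
  assumes "Gcd A = 1" "\<not> is_unit q"
  shows "\<exists>a\<in>A. \<not> q dvd a"
proof (rule ccontr)
  assume "\<not> (\<exists>a\<in>A. \<not> q dvd a)"
  hence "q dvd Gcd A" by (auto intro: Gcd_greatest)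
  thus False using assms by simp
qed

lemma simple_prime_factor_with_root:
  fixes d e :: "'k::field_gcd poly" and \<iota> :: "'k \<Rightarrow> 'c::field"
  assumes "alg_closure_of \<iota>" "squarefree d" "gcd d e = 1" "poly (map_poly \<iota> d) a = 0"
  obtains q d1 where "prime q" "d = q * d1" "\<not> q dvd d1" "\<not> q dvd e"
proof -
  have "d \<noteq> 0" using \<open>squarefree d\<close> by auto
  then obtain q where "prime q" "q dvd d"
    using prime_factor_with_root[OF assms(1) _ assms(4)] by blast
  moreover from this have "\<not> q dvd e"
    using \<open>gcd d e = 1\<close> by (auto simp: coprime_iff_gcd_eq_1 coprime_common_divisor not_prime_unit)
  ultimately show ?thesis
    using squarefree_prime_factor[OF \<open>squarefree d\<close>] that by (metis not_prime_unit)
qed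

theorem lemma7:
  fixes m :: "'k::{field_char_0,field_gcd} poly poly" and \<iota> :: "'k \<Rightarrow> 'c::field"
    and W :: "nat \<Rightarrow> 'k poly fract poly" and e d :: "'k poly"
    and M :: "nat \<Rightarrow> nat \<Rightarrow> 'k poly" and hs :: "nat \<Rightarrow> 'k poly" and a :: 'c
  assumes "alg_closure_of \<iota>"
    and "irreducible (mR m)"
    and "suitable_basis \<iota> m W"
    and "deriv_rel m W e M"
    and "Gcd (insert e {M i i |i. i < degree m}) = 1"
    and "gcd d e = 1"
    and "Gcd (insert d (hs ` {..<degree m})) = 1"
    and "squarefree d"
    and "integrable m (\<Sum>i<degree m. smult (Fract (hs i) (d * e)) (W i))"
    and "local_integral_basis \<iota> m a W"
  shows "poly (map_poly \<iota> d) a \<noteq> 0"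
proof
  assume "poly (map_poly \<iota> d) a = 0"
  then obtain q d1 where "prime q" and d: "d = q * d1" "\<not> q dvd d1" and "\<not> q dvd e"
    using simple_prime_factor_with_root[OF \<open>alg_closure_of \<iota>\<close> \<open>squarefree d\<close> \<open>gcd d e = 1\<close>]
    by blast
  hence q: "prime_elem q" "\<not> is_unit q" and "\<not> q dvd d1 * e"
    by (simp_all add: not_prime_unit prime_elem_dvd_mult_iff)
  obtain j0 where "j0 < degree m" "\<not> q dvd hs j0"
    using Gcd_eq_1_imp_not_dvd[OF assms(7) q(2)] d(1) by auto
  have "is_basis m W" "e \<noteq> 0"
    using assms(10) \<open>\<not> q dvd e\<close> unfolding local_integral_basis_def by auto
  then obtain c where c: "\<forall>j<degree m.
      Fract (hs j) (d * e) = rf_deriv (c j) + (\<Sum>i<degree m. c i * Fract (M i j) e)"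
    using integrable_basis_coeffs[OF assms(2) _ assms(4) _ assms(9)] by blast
  have "val_ge q 0 (Fract (hs j0) (d * e))"
  proof (rule first_order_system_val_ge_0[OF q(1) finite_lessThan,
        where b = "\<lambda>i j. Fract (M i j) e" and c = c and h = "\<lambda>j. Fract (hs j) (d * e)"])
    show "val_ge q (-1) (Fract (hs j) (d * e))" for j
      using val_ge_Fract_prime_mult[OF q(1) \<open>\<not> q dvd d1 * e\<close>] by (simp add: d mult.assoc)
  qed (use c \<open>j0 < degree m\<close> \<open>\<not> q dvd e\<close> in \<open>simp_all add: val_ge_0_Fract\<close>)
  moreover have "val_eq q (-1) (Fract (hs j0) (d * e))"
    using val_eq_Fract_prime_mult[OF q(1) \<open>\<not> q dvd hs j0\<close> \<open>\<not> q dvd d1 * e\<close>]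
    by (simp add: d mult.assoc)
  ultimately show False using val_eq_imp_not_val_ge[OF q(1), of "-1"] by simp
qed

end
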